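(* Let $\Gamma$ be a geometrically finite Fuchsian group such that $\infty\notin\widehat{\mathbb{R}}_{\mathrm{st}}$, so that the stabilizer $\Gamma_\infty$ of $\infty$ in $\Gamma$ is either trivial or generated by $t_\lambda=\begin{bmatrix}1&\lambda\\0&1\end{bmatrix}$ for some $\lambda>0$. Let $\mathrm{I},\mathrm{J}$ be isometric spheres of $\Gamma$ which are concentric (i.e. have the same Euclidean center). Then $\mathrm{I}=\mathrm{J}$.
   Context: A Fuchsian group is a discrete subgroup of $\mathrm{PSL}_2(\mathbb{R})$, acting on the upper half-plane $\mathbb{H}$ and on $\widehat{\mathbb{R}}=\mathbb{R}\cup\{\infty\}$ by linear fractional transformations. $\Lambda(\Gamma)$ denotes the limit set, and $\widehat{\mathbb{R}}_{\mathrm{st}}$ is $\Lambda(\Gamma)$ with all parabolic fixed points of $\Gamma$ removed. For $g=\begin{bmatrix}a&b\\c&d\end{bmatrix}\in\Gamma\setminus\Gamma_\infty$ (so $c\neq 0$) the isometric sphere of $g$ is $\mathrm{I}(g)=\{z\in\mathbb{H}: |g'(z)|=1\}=\{z\in\mathbb{H}: |z+\tfrac{d}{c}|=\tfrac{1}{|c|}\}$, a Euclidean semicircle with center $-d/c$ and radius $1/|c|$. The isometric spheres of $\Gamma$ are the sets $\mathrm{I}(g)$, $g\in\Gamma\setminus\Gamma_\infty$. *)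

theory Defs
  imports "HOL-Analysis.Analysis"
begin

text \<open>Elements of PSL(2,R) are represented by matrices in SL(2,R); a subgroup of
PSL(2,R) is represented by its preimage in SL(2,R), i.e. a subgroup of SL(2,R)
that is closed under negation.\<close>

type_synonym mat2 = "real^2^2"

definition SL2 :: "mat2 set" where
  "SL2 = {A. det A = 1}"

definition fuchsian :: "mat2 set \<Rightarrow> bool" where
  "fuchsian \<Gamma> \<longleftrightarrow>
     \<Gamma> \<subseteq> SL2 \<and> mat 1 \<in> \<Gamma> \<and>
     (\<forall>A\<in>\<Gamma>. \<forall>B\<in>\<Gamma>. A ** B \<in> \<Gamma>) \<and>
     (\<forall>A\<in>\<Gamma>. matrix_inv A \<in> \<Gamma>) \<and>
     (\<forall>A\<in>\<Gamma>. - A \<in> \<Gamma>) \<and>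
     (\<forall>A\<in>\<Gamma>. \<exists>e>0. \<forall>B\<in>\<Gamma>. dist B A < e \<longrightarrow> B = A)"

definition moeb :: "mat2 \<Rightarrow> complex \<Rightarrow> complex" where
  "moeb A z = (of_real (A$1$1) * z + of_real (A$1$2)) / (of_real (A$2$1) * z + of_real (A$2$2))"

definition upper_half_plane :: "complex set" where
  "upper_half_plane = {z. Im z > 0}"

text \<open>Extended real line: None is infinity, Some x is x.\<close>
definition act_ext :: "mat2 \<Rightarrow> real option \<Rightarrow> real option" where
  "act_ext A p = (case p of
      None \<Rightarrow> (if A$2$1 = 0 then None else Some (A$1$1 / A$2$1))
    | Some x \<Rightarrow> (if A$2$1 * x + A$2$2 = 0 then None
                 else Some ((A$1$1 * x + A$1$2) / (A$2$1 * x + A$2$2))))"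

definition orbit_i :: "mat2 set \<Rightarrow> complex set" where
  "orbit_i \<Gamma> = (\<lambda>g. moeb g \<i>) ` \<Gamma>"

text \<open>Limit set: accumulation points in \<open>\<real> \<union> {\<infinity>}\<close> of an orbit \<Gamma>i.\<close>
definition limit_set :: "mat2 set \<Rightarrow> real option set" where
  "limit_set \<Gamma> = {p. case p of
      None \<Rightarrow> \<not> bounded (orbit_i \<Gamma>)
    | Some x \<Rightarrow> complex_of_real x islimpt orbit_i \<Gamma>}"

definition parabolic :: "mat2 \<Rightarrow> bool" where
  "parabolic A \<longleftrightarrow> A \<in> SL2 \<and> \<bar>A$1$1 + A$2$2\<bar> = 2 \<and> A \<noteq> mat 1 \<and> A \<noteq> - mat 1"

definition parabolic_fixed_points :: "mat2 set \<Rightarrow> real option set" where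
  "parabolic_fixed_points \<Gamma> = {p. \<exists>A\<in>\<Gamma>. parabolic A \<and> act_ext A p = p}"

definition R_st :: "mat2 set \<Rightarrow> real option set" where
  "R_st \<Gamma> = limit_set \<Gamma> - parabolic_fixed_points \<Gamma>"

definition hyp_halfplane :: "complex set \<Rightarrow> bool" where
  "hyp_halfplane S \<longleftrightarrow>
     (\<exists>a. S = {z \<in> upper_half_plane. Re z \<le> a} \<or> S = {z \<in> upper_half_plane. Re z \<ge> a}) \<or>
     (\<exists>c r. r > 0 \<and> (S = {z \<in> upper_half_plane. cmod (z - complex_of_real c) \<le> r} \<or>
                     S = {z \<in> upper_half_plane. cmod (z - complex_of_real c) \<ge> r}))"

text \<open>Geometrically finite: there is a convex fundamental polygon with finitely many sides,
i.e. a finite intersection of closed hyperbolic half-planes whose \<Gamma>-translates cover the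
upper half-plane and whose interior is disjoint from its nontrivial translates.\<close>
definition geometrically_finite :: "mat2 set \<Rightarrow> bool" where
  "geometrically_finite \<Gamma> \<longleftrightarrow>
     (\<exists>P. finite P \<and> (\<forall>S\<in>P. hyp_halfplane S) \<and>
        (let F = upper_half_plane \<inter> \<Inter>P in
           interior F \<noteq> {} \<and>
           (\<Union>g\<in>\<Gamma>. moeb g ` F) = upper_half_plane \<and>
           (\<forall>g\<in>\<Gamma>. g \<noteq> mat 1 \<and> g \<noteq> - mat 1 \<longrightarrow> interior F \<inter> moeb g ` interior F = {})))"

definition isometric_sphere :: "mat2 \<Rightarrow> complex set" where
  "isometric_sphere g = {z \<in> upper_half_plane.
      cmod (z + complex_of_real (g$2$2 / g$2$1)) = 1 / \<bar>g$2$1\<bar>}"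

definition isom_center :: "mat2 \<Rightarrow> real" where
  "isom_center g = - g$2$2 / g$2$1"

definition isometric_spheres :: "mat2 set \<Rightarrow> complex set set" where
  "isometric_spheres \<Gamma> = {isometric_sphere g | g. g \<in> \<Gamma> \<and> g$2$1 \<noteq> 0}"

end

theory Submission
  imports Defs
begin

text \<open>If \<open>g\<close> and \<open>h\<close> have the same isometric-sphere center \<open>-d/c\<close>, then \<open>k = g h\<^sup>-\<^sup>1\<close> fixes \<open>\<infinity>\<close>
and its upper left entry is \<open>c\<^sub>h / c\<^sub>g\<close>; the radii \<open>1/\<bar>c\<bar>\<close> differ exactly when \<open>k\<close> or
\<open>k\<^sup>-\<^sup>1\<close> is a dilation \<open>z \<mapsto> \<alpha>\<^sup>2 z + \<beta>\<close> with \<open>\<bar>\<alpha>\<bar> > 1\<close>. Such a dilation makes \<open>\<infinity>\<close> a limit point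
(the orbit of \<open>i\<close> under its powers has unbounded imaginary part), and \<open>\<infinity>\<close> cannot also be a
parabolic fixed point: conjugating a translation fixing \<open>\<infinity>\<close> by the powers of the dilation
shrinks its translation length to \<open>0\<close>, contradicting discreteness. So \<open>\<infinity> \<in> \<real>\<^sub>s\<^sub>t\<close>.\<close>

definition adjugate2 :: "mat2 \<Rightarrow> mat2" where
  "adjugate2 M = vector [vector [M$2$2, - M$1$2], vector [- M$2$1, M$1$1]]"

lemma adjugate2_nth [simp]:
  "adjugate2 M $1$1 = M$2$2" "adjugate2 M $1$2 = - M$1$2"
  "adjugate2 M $2$1 = - M$2$1" "adjugate2 M $2$2 = M$1$1"
  by (simp_all add: adjugate2_def)

lemma mat2_mult_nth: "((A::mat2) ** B)$i$j = A$i$1 * B$1$j + A$i$2 * B$2$j"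
  by (simp add: matrix_matrix_mult_def sum_2)

lemma mat2_eq_iff:
  "(A::mat2) = B \<longleftrightarrow> A$1$1 = B$1$1 \<and> A$1$2 = B$1$2 \<and> A$2$1 = B$2$1 \<and> A$2$2 = B$2$2"
  by (auto simp: vec_eq_iff forall_2)

lemma mat2_one_nth [simp]:
  "(mat 1 :: mat2)$1$1 = 1" "(mat 1 :: mat2)$1$2 = 0"
  "(mat 1 :: mat2)$2$1 = 0" "(mat 1 :: mat2)$2$2 = 1"
  by (simp_all add: mat_def)

lemma matrix_inv_unique:
  fixes A B :: "'a::comm_ring_1^'n^'n"
  assumes "A ** B = mat 1" "B ** A = mat 1"
  shows "matrix_inv A = B"
proof -
  let ?A' = "matrix_inv A"
  have "A ** ?A' = mat 1 \<and> ?A' ** A = mat 1"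
    unfolding matrix_inv_def by (rule someI[of _ B]) (use assms in auto)
  then have "?A' = ?A' ** (A ** B)" "?A' ** A = mat 1" using assms by auto
  then show ?thesis by (metis matrix_mul_assoc matrix_mul_lid matrix_mul_rid)
qed

lemma matrix_inv_mat2:
  assumes "det (A::mat2) = 1"
  shows "matrix_inv A = adjugate2 A"
  by (rule matrix_inv_unique)
    (use assms in \<open>auto simp: mat2_eq_iff mat2_mult_nth det_2 algebra_simps\<close>)

lemma norm_mat2_le: "norm (A::mat2) \<le> \<bar>A$1$1\<bar> + \<bar>A$1$2\<bar> + \<bar>A$2$1\<bar> + \<bar>A$2$2\<bar>"
proof -
  have "norm A \<le> (\<Sum>i\<in>UNIV. norm (A$i))"
    unfolding norm_vec_def by (rule L2_set_le_sum) auto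
  also have "\<dots> = norm (A$1) + norm (A$2)" by (simp add: sum_2)
  also have "\<dots> \<le> (\<bar>A$1$1\<bar> + \<bar>A$1$2\<bar>) + (\<bar>A$2$1\<bar> + \<bar>A$2$2\<bar>)"
    using norm_le_l1_cart[of "A$1"] norm_le_l1_cart[of "A$2"] by (simp add: sum_2)
  finally show ?thesis by simp
qed

lemma fuchsian_det: "fuchsian \<Gamma> \<Longrightarrow> A \<in> \<Gamma> \<Longrightarrow> det A = 1"
  by (auto simp: fuchsian_def SL2_def)

lemma fuchsian_one: "fuchsian \<Gamma> \<Longrightarrow> mat 1 \<in> \<Gamma>"
  by (simp add: fuchsian_def)

lemma fuchsian_mult: "fuchsian \<Gamma> \<Longrightarrow> A \<in> \<Gamma> \<Longrightarrow> B \<in> \<Gamma> \<Longrightarrow> A ** B \<in> \<Gamma>"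
  by (simp add: fuchsian_def)

lemma fuchsian_uminus: "fuchsian \<Gamma> \<Longrightarrow> A \<in> \<Gamma> \<Longrightarrow> - A \<in> \<Gamma>"
  by (simp add: fuchsian_def)

lemma fuchsian_adjugate2: "fuchsian \<Gamma> \<Longrightarrow> A \<in> \<Gamma> \<Longrightarrow> adjugate2 A \<in> \<Gamma>"
  by (metis fuchsian_def fuchsian_det matrix_inv_mat2)

lemma fuchsian_isolated:
  "fuchsian \<Gamma> \<Longrightarrow> A \<in> \<Gamma> \<Longrightarrow> \<exists>e>0. \<forall>B\<in>\<Gamma>. dist B A < e \<longrightarrow> B = A"
  by (simp add: fuchsian_def)

lemma act_ext_fixes_infinity_iff: "act_ext A None = None \<longleftrightarrow> A$2$1 = 0"
  by (simp add: act_ext_def)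

lemma Im_moeb_i_upper_triangular:
  assumes "det K = 1" "K$2$1 = 0"
  shows "Im (moeb K \<i>) = (K$1$1)\<^sup>2"
proof -
  have diag: "K$1$1 * K$2$2 = 1" using assms by (simp add: det_2)
  then have "K$2$2 \<noteq> 0" by auto
  then have "Im (moeb K \<i>) = K$1$1 / K$2$2"
    using assms(2) by (simp add: moeb_def Im_divide power2_eq_square)
  also have "\<dots> = (K$1$1)\<^sup>2" using diag \<open>K$2$2 \<noteq> 0\<close>
    by (simp add: divide_simps power2_eq_square)
  finally show ?thesis .
qed

lemma unbounded_orbit_i_if_dilation:
  assumes F: "fuchsian \<Gamma>" and k: "k \<in> \<Gamma>" "k$2$1 = 0" "\<bar>k$1$1\<bar> > 1"
  shows "\<not> bounded (orbit_i \<Gamma>)"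
proof
  assume "bounded (orbit_i \<Gamma>)"
  then obtain M where M: "\<forall>z\<in>orbit_i \<Gamma>. norm z \<le> M" unfolding bounded_iff by blast
  define K where "K n = ((\<lambda>A. k ** A) ^^ n) (mat 1)" for n
  have K: "K n \<in> \<Gamma> \<and> K n $2$1 = 0 \<and> K n $1$1 = (k$1$1)^n" for n
  proof (induction n)
    case 0
    then show ?case using fuchsian_one[OF F] by (simp add: K_def)
  next
    case (Suc n)
    have "K (Suc n) = k ** K n" by (simp add: K_def)
    then show ?case using Suc fuchsian_mult[OF F k(1)] k(2) by (simp add: mat2_mult_nth)
  qed
  have "1 < (k$1$1)\<^sup>2" using one_less_power[of "\<bar>k$1$1\<bar>" 2] k(3) by simp
  then obtain n where n: "M < ((k$1$1)\<^sup>2)^n" using real_arch_pow by blast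
  have "moeb (K n) \<i> \<in> orbit_i \<Gamma>" using K[of n] by (auto simp: orbit_i_def)
  then have "\<bar>Im (moeb (K n) \<i>)\<bar> \<le> M" using M abs_Im_le_cmod order_trans by blast
  moreover have "Im (moeb (K n) \<i>) = ((k$1$1)\<^sup>2)^n"
    using Im_moeb_i_upper_triangular[of "K n"] K[of n] fuchsian_det[OF F]
    by (simp add: power_mult[symmetric] mult.commute)
  ultimately show False using n by simp
qed

lemma parabolic_fixing_infinity:
  assumes "parabolic A" "A$2$1 = 0"
  shows "A$2$2 = A$1$1" "A$1$1 = 1 \<or> A$1$1 = -1" "A$1$2 \<noteq> 0"
proof -
  have diag: "A$1$1 * A$2$2 = 1" and tr: "\<bar>A$1$1 + A$2$2\<bar> = 2"
    using assms by (auto simp: parabolic_def SL2_def det_2)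
  have "(A$1$1 + A$2$2)\<^sup>2 = 4" using power2_abs[of "A$1$1 + A$2$2"] tr by simp
  moreover have "(A$1$1 - A$2$2)\<^sup>2 = (A$1$1 + A$2$2)\<^sup>2 - 4 * (A$1$1 * A$2$2)"
    by (simp add: power2_eq_square algebra_simps)
  ultimately have "(A$1$1 - A$2$2)\<^sup>2 = 0" using diag by simp
  then show diag_eq: "A$2$2 = A$1$1" by simp
  then show pm1: "A$1$1 = 1 \<or> A$1$1 = -1" using diag square_eq_1_iff[of "A$1$1"] by simp
  show "A$1$2 \<noteq> 0"
  proof
    assume "A$1$2 = 0"
    then have "A = mat 1 \<or> A = - mat 1" using pm1 diag_eq assms(2) by (auto simp: mat2_eq_iff)
    then show False using assms(1) by (simp add: parabolic_def)
  qed
qed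

lemma conjugate_translation_by_upper_triangular:
  assumes "k$2$1 = 0" "k$1$1 * k$2$2 = 1" "A$2$1 = 0" "A$2$2 = A$1$1"
  shows "(adjugate2 k ** A ** k)$2$1 = 0" "(adjugate2 k ** A ** k)$1$1 = A$1$1"
    "(adjugate2 k ** A ** k)$2$2 = A$1$1" "(adjugate2 k ** A ** k)$1$2 = (k$2$2)\<^sup>2 * A$1$2"
  using assms by (simp_all add: mat2_mult_nth algebra_simps power2_eq_square)

lemma infinity_not_parabolic_fixed_point_if_dilation:
  assumes F: "fuchsian \<Gamma>" and k: "k \<in> \<Gamma>" "k$2$1 = 0" "\<bar>k$1$1\<bar> > 1"
  shows "None \<notin> parabolic_fixed_points \<Gamma>"
proof
  assume "None \<in> parabolic_fixed_points \<Gamma>"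
  then obtain A where A: "A \<in> \<Gamma>" "parabolic A" "A$2$1 = 0"
    by (auto simp: parabolic_fixed_points_def act_ext_fixes_infinity_iff)
  define a t where "a = A$1$1" and "t = A$1$2"
  have A22: "A$2$2 = a" and a: "a = 1 \<or> a = -1" and t: "t \<noteq> 0"
    using parabolic_fixing_infinity[OF A(2,3)] by (simp_all add: a_def t_def)
  have diag: "k$1$1 * k$2$2 = 1" using fuchsian_det[OF F k(1)] k(2) by (simp add: det_2)
  have shrink: "(k$2$2)\<^sup>2 < 1"
  proof -
    have "(k$1$1)\<^sup>2 * (k$2$2)\<^sup>2 = 1" using diag by (simp add: power_mult_distrib[symmetric])
    moreover have "1 < (k$1$1)\<^sup>2" using one_less_power[of "\<bar>k$1$1\<bar>" 2] k(3) by simp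
    ultimately have "(k$2$2)\<^sup>2 = 1 / (k$1$1)\<^sup>2" by (auto simp: eq_divide_eq mult.commute)
    then show ?thesis using \<open>1 < (k$1$1)\<^sup>2\<close>
      by (metis divide_less_eq_1_pos less_trans zero_less_one)
  qed
  define B where "B n = ((\<lambda>M. adjugate2 k ** M ** k) ^^ n) A" for n
  have B: "B n \<in> \<Gamma> \<and> B n $2$1 = 0 \<and> B n $1$1 = a \<and> B n $2$2 = a \<and> B n $1$2 = ((k$2$2)\<^sup>2)^n * t"
    for n
  proof (induction n)
    case 0
    then show ?case using A A22 by (simp add: B_def a_def t_def)
  next
    case (Suc n)
    have "B (Suc n) = adjugate2 k ** B n ** k" by (simp add: B_def)
    then show ?case
      using Suc conjugate_translation_by_upper_triangular[OF k(2) diag, of "B n"]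
        fuchsian_mult[OF F] fuchsian_adjugate2[OF F k(1)] k(1) by simp
  qed
  define P where "P = (if a = 1 then mat 1 else - mat 1 :: mat2)"
  have P: "P \<in> \<Gamma>" "P$1$1 = a" "P$1$2 = 0" "P$2$1 = 0" "P$2$2 = a"
    using fuchsian_one[OF F] fuchsian_uminus[OF F] a by (auto simp: P_def)
  obtain e where e: "e > 0" "\<forall>B\<in>\<Gamma>. dist B P < e \<longrightarrow> B = P"
    using fuchsian_isolated[OF F P(1)] by blast
  obtain n where n: "((k$2$2)\<^sup>2)^n < e / \<bar>t\<bar>"
    using real_arch_pow_inv[of "e / \<bar>t\<bar>"] shrink e(1) t by auto
  have "dist (B n) P \<le> ((k$2$2)\<^sup>2)^n * \<bar>t\<bar>"
    using norm_mat2_le[of "B n - P"] B[of n] P by (simp add: dist_norm abs_mult)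
  also have "\<dots> < e" using n t by (simp add: pos_less_divide_eq)
  finally have "B n = P" using e B[of n] by blast
  moreover have "k$2$2 \<noteq> 0" using diag by auto
  ultimately show False using B[of n] P t by simp
qed

lemma infinity_in_R_st_if_dilation:
  assumes "fuchsian \<Gamma>" "k \<in> \<Gamma>" "k$2$1 = 0" "\<bar>k$1$1\<bar> > 1"
  shows "None \<in> R_st \<Gamma>"
  using unbounded_orbit_i_if_dilation[OF assms] infinity_not_parabolic_fixed_point_if_dilation[OF assms]
  by (simp add: R_st_def limit_set_def)

lemma concentric_quotient_fixes_infinity:
  assumes "g$2$1 \<noteq> 0" "h$2$1 \<noteq> 0" "isom_center g = isom_center h" "det g = 1"
  shows "(g ** adjugate2 h)$2$1 = 0" "g$2$1 * (g ** adjugate2 h)$1$1 = h$2$1"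
proof -
  have cc: "g$2$2 * h$2$1 = h$2$2 * g$2$1"
    using assms(1-3) by (simp add: isom_center_def field_simps)
  then show "(g ** adjugate2 h)$2$1 = 0" by (simp add: mat2_mult_nth algebra_simps)
  have "g$2$1 * (g ** adjugate2 h)$1$1 = h$2$1 * det g"
    using cc by (simp add: mat2_mult_nth det_2 algebra_simps)
  then show "g$2$1 * (g ** adjugate2 h)$1$1 = h$2$1" using assms(4) by simp
qed

lemma concentric_lower_left_abs_le:
  assumes F: "fuchsian \<Gamma>" and N: "None \<notin> R_st \<Gamma>"
    and g: "g \<in> \<Gamma>" "g$2$1 \<noteq> 0" and h: "h \<in> \<Gamma>" "h$2$1 \<noteq> 0"
    and c: "isom_center g = isom_center h"
  shows "\<bar>h$2$1\<bar> \<le> \<bar>g$2$1\<bar>"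
proof (rule ccontr)
  assume lt: "\<not> \<bar>h$2$1\<bar> \<le> \<bar>g$2$1\<bar>"
  let ?k = "g ** adjugate2 h"
  have k: "?k \<in> \<Gamma>" using F g(1) h(1) by (simp add: fuchsian_mult fuchsian_adjugate2)
  note quot = concentric_quotient_fixes_infinity[OF g(2) h(2) c fuchsian_det[OF F g(1)]]
  have "\<bar>g$2$1\<bar> * \<bar>?k$1$1\<bar> = \<bar>h$2$1\<bar>" using quot(2) by (metis abs_mult)
  then have "\<bar>?k$1$1\<bar> > 1" using lt g(2) by (metis mult.right_neutral mult_le_cancel_left_pos
        not_le zero_less_abs_iff)
  then show False using infinity_in_R_st_if_dilation[OF F k quot(1)] N by simp
qed

theorem lemma2p1:
  fixes \<Gamma> :: "mat2 set" and g h :: mat2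
  assumes "fuchsian \<Gamma>"
    and "geometrically_finite \<Gamma>"
    and "None \<notin> R_st \<Gamma>"
    and "g \<in> \<Gamma>" and "g$2$1 \<noteq> 0"
    and "h \<in> \<Gamma>" and "h$2$1 \<noteq> 0"
    and "isom_center g = isom_center h"
  shows "isometric_sphere g = isometric_sphere h"
proof -
  have "\<bar>g$2$1\<bar> = \<bar>h$2$1\<bar>"
    using concentric_lower_left_abs_le[OF assms(1,3,4,5,6,7,8)]
      concentric_lower_left_abs_le[OF assms(1,3,6,7,4,5) assms(8)[symmetric]] by linarith
  moreover have "g$2$2 / g$2$1 = h$2$2 / h$2$1" using assms(8) by (simp add: isom_center_def)
  ultimately show ?thesis by (simp add: isometric_sphere_def)
qed

end
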